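(* Let $k$ be a field, $M$ a regular matroid of rank $r$ on $E=\{e_1<\cdots<e_n\}$ with basis $B=\{e_{n-r+1},\ldots,e_n\}$ and an admissible signed fundamental cocircuit incidence matrix $(a^*_{ji})$ w.r.t. $B$. Label the circuits $C_1,\ldots,C_m$ of $M$ so that $C_i=\mathrm{ci}(B,e_i)$ for $1\le i\le n-r$. Define $d_j=j$ for $j\le n-r$ and $d_j=\min\{i: e_i\in\mathrm{coc}(B,e_j)\}$ for $j\ge n-r+1$, and set $m_{C_i}=x_i^{|\overline{C}_i|}$ if $i\le n-r$ and $m_{C_i}=\prod_{e_j\in\overline{C}_i}x_{d_j}$ if $i\ge n-r+1$. Let $p_C$ be the polynomial obtained from $\prod_{e_j\in\overline{C}}x_j$ by substituting, for every $j\ge n-r+1$, $x_j=-(a^*_{jj})^{-1}\sum_{e_i\in\mathrm{coc}(B,e_j),\,i\ne j}a^*_{ji}x_i$. Then for every circuit $C$ of $M$, the monomial $m_C$ occurs (up to sign) as a term of $p_C$.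
   Context: For $e\notin B$, $\mathrm{ci}(B,e)$ is the unique circuit contained in $B\cup\{e\}$; for $b\in B$, $\mathrm{coc}(B,b)$ is the unique cocircuit contained in $(E\setminus B)\cup\{b\}$ and containing $b$. $\overline{C}=C\setminus\{\min C\}$. The fundamental cocircuit incidence matrix has rows indexed by $\mathrm{coc}(B,e_j)$, $e_j\in B$, columns by $e_1,\ldots,e_n$, with $0/1$ incidence entries. A signing replaces some $1$'s by $-1$; it is admissible over $k$ if it is the restriction of a signing of the full cocircuit incidence matrix for which some signing of the full circuit incidence matrix satisfies $\widetilde{\mathcal{A}}_M(\mathcal{C})\widetilde{\mathcal{A}}_M(\mathcal{C}^* )^T=0$ over $k$. *)

theory Defs
  imports "Jordan_Normal_Form.Determinant" "HOL-Library.Poly_Mapping"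
begin

definition matroid :: "nat set \<Rightarrow> (nat set \<Rightarrow> bool) \<Rightarrow> bool" where
  "matroid E ind \<longleftrightarrow> finite E \<and> ind {} \<and>
     (\<forall>X. ind X \<longrightarrow> X \<subseteq> E) \<and>
     (\<forall>X Y. ind Y \<and> X \<subseteq> Y \<longrightarrow> ind X) \<and>
     (\<forall>X Y. ind X \<and> ind Y \<and> card X < card Y \<longrightarrow> (\<exists>y\<in>Y - X. ind (insert y X)))"

definition basis :: "nat set \<Rightarrow> (nat set \<Rightarrow> bool) \<Rightarrow> nat set \<Rightarrow> bool" where
  "basis E ind B \<longleftrightarrow> ind B \<and> (\<forall>X. ind X \<and> B \<subseteq> X \<longrightarrow> X = B)"

definition circuit :: "nat set \<Rightarrow> (nat set \<Rightarrow> bool) \<Rightarrow> nat set \<Rightarrow> bool" where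
  "circuit E ind C \<longleftrightarrow> C \<subseteq> E \<and> \<not> ind C \<and> (\<forall>D. D \<subset> C \<longrightarrow> ind D)"

definition cocircuit :: "nat set \<Rightarrow> (nat set \<Rightarrow> bool) \<Rightarrow> nat set \<Rightarrow> bool" where
  "cocircuit E ind D \<longleftrightarrow> D \<subseteq> E \<and> (\<forall>B. basis E ind B \<longrightarrow> D \<inter> B \<noteq> {}) \<and>
     (\<forall>D'. D' \<subset> D \<longrightarrow> (\<exists>B. basis E ind B \<and> D' \<inter> B = {}))"

definition ci :: "nat set \<Rightarrow> (nat set \<Rightarrow> bool) \<Rightarrow> nat set \<Rightarrow> nat \<Rightarrow> nat set" where
  "ci E ind B e = (THE C. circuit E ind C \<and> C \<subseteq> insert e B)"

definition coc :: "nat set \<Rightarrow> (nat set \<Rightarrow> bool) \<Rightarrow> nat set \<Rightarrow> nat \<Rightarrow> nat set" where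
  "coc E ind B b = (THE D. cocircuit E ind D \<and> D \<subseteq> insert b (E - B) \<and> b \<in> D)"

definition totally_unimodular :: "nat \<Rightarrow> nat set \<Rightarrow> (nat \<Rightarrow> nat \<Rightarrow> int) \<Rightarrow> bool" where
  "totally_unimodular d E A \<longleftrightarrow>
     (\<forall>k f g. inj_on f {..<k} \<and> f ` {..<k} \<subseteq> {..<d} \<and> inj_on g {..<k} \<and> g ` {..<k} \<subseteq> E \<longrightarrow>
        det (mat k k (\<lambda>(a, b). A (f a) (g b))) \<in> {-1, 0, 1})"

definition real_lin_indep_cols :: "nat \<Rightarrow> (nat \<Rightarrow> nat \<Rightarrow> int) \<Rightarrow> nat set \<Rightarrow> bool" where
  "real_lin_indep_cols d A S \<longleftrightarrow>
     (\<forall>c :: nat \<Rightarrow> real. (\<forall>i<d. (\<Sum>e\<in>S. c e * real_of_int (A i e)) = 0) \<longrightarrow> (\<forall>e\<in>S. c e = 0))"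

definition regular :: "nat set \<Rightarrow> (nat set \<Rightarrow> bool) \<Rightarrow> bool" where
  "regular E ind \<longleftrightarrow> (\<exists>d A. totally_unimodular d E A \<and>
     (\<forall>X. ind X \<longleftrightarrow> X \<subseteq> E \<and> real_lin_indep_cols d A X))"

definition signing :: "(nat set \<Rightarrow> bool) \<Rightarrow> (nat set \<Rightarrow> nat \<Rightarrow> 'k::ring_1) \<Rightarrow> bool" where
  "signing P s \<longleftrightarrow> (\<forall>X. P X \<longrightarrow> (\<forall>e. (e \<in> X \<longrightarrow> s X e = 1 \<or> s X e = -1) \<and> (e \<notin> X \<longrightarrow> s X e = 0)))"

definition admissible_fund_signing ::
  "nat set \<Rightarrow> (nat set \<Rightarrow> bool) \<Rightarrow> nat set \<Rightarrow> (nat \<Rightarrow> nat \<Rightarrow> 'k::field) \<Rightarrow> bool" where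
  "admissible_fund_signing E ind B a \<longleftrightarrow>
     (\<exists>(sC :: nat set \<Rightarrow> nat \<Rightarrow> 'k) (sD :: nat set \<Rightarrow> nat \<Rightarrow> 'k).
        signing (circuit E ind) sC \<and> signing (cocircuit E ind) sD \<and>
        (\<forall>C D. circuit E ind C \<and> cocircuit E ind D \<longrightarrow> (\<Sum>e\<in>E. sC C e * sD D e) = 0) \<and>
        (\<forall>j\<in>B. \<forall>i\<in>E. a j i = sD (coc E ind B j) i))"

type_synonym 'k mpoly = "(nat \<Rightarrow>\<^sub>0 nat) \<Rightarrow>\<^sub>0 'k"

definition Var :: "nat \<Rightarrow> 'k::{zero,one} mpoly" where
  "Var i = Poly_Mapping.single (Poly_Mapping.single i 1) 1"

definition cbar :: "nat set \<Rightarrow> nat set" where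
  "cbar C = C - {Min C}"

definition dd :: "nat set \<Rightarrow> (nat set \<Rightarrow> bool) \<Rightarrow> nat set \<Rightarrow> nat \<Rightarrow> nat" where
  "dd E ind B j = (if j \<in> B then Min (coc E ind B j) else j)"

definition mC :: "nat \<Rightarrow> nat \<Rightarrow> (nat set \<Rightarrow> bool) \<Rightarrow> nat set \<Rightarrow> (nat \<Rightarrow>\<^sub>0 nat)" where
  "mC n r ind C =
    (let E = {1..n}; B = {n - r + 1..n} in
     if (\<exists>i\<in>{1..n - r}. C = ci E ind B i)
     then Poly_Mapping.single (THE i. i \<in> {1..n - r} \<and> C = ci E ind B i) (card (cbar C))
     else (\<Sum>j\<in>cbar C. Poly_Mapping.single (dd E ind B j) 1))"

definition pC :: "nat \<Rightarrow> nat \<Rightarrow> (nat set \<Rightarrow> bool) \<Rightarrow> (nat \<Rightarrow> nat \<Rightarrow> 'k::field) \<Rightarrow> nat set \<Rightarrow> 'k mpoly" where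
  "pC n r ind a C =
    (let E = {1..n}; B = {n - r + 1..n} in
     \<Prod>j\<in>cbar C. (if j \<in> B
                   then - (\<Sum>i\<in>coc E ind B j - {j}.
                            Poly_Mapping.single (Poly_Mapping.single i 1) (inverse (a j j) * a j i))
                   else Var j))"

end

theory Submission
  imports Defs
begin

text \<open>
  After the substitution, \<open>pC C\<close> is a product of linear forms, one for each \<open>j \<in> cbar C\<close>: the
  variable \<open>x\<^sub>j\<close> if \<open>j \<notin> B\<close>, and a \<open>\<plusminus>1\<close>-combination of the variables \<open>x\<^sub>i\<close>, \<open>i \<in> coc(B,j) - {j}\<close>,
  if \<open>j \<in> B\<close>. If \<open>mC C\<close> arises from exactly one choice of a variable in each factor, its
  coefficient is a product of signs. Orthogonality of the signed circuit and cocircuit matrices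
  forbids a circuit and a cocircuit to meet in a single element, so for \<open>j \<in> cbar C \<inter> B\<close> the
  cocircuit \<open>coc(B,j)\<close> meets \<open>C\<close> in some \<open>i < j\<close>. If \<open>C = ci(B,i)\<close>, this \<open>i\<close> is the only non-basis
  element of \<open>C\<close>, so \<open>x\<^sub>i\<close> occurs in every factor and \<open>x\<^sub>i\<^bsup>|cbar C|\<^esup>\<close> arises only by choosing it
  everywhere. Otherwise \<open>x\<^bsub>d\<^sub>j\<^esub>\<close> has the least index in the \<open>j\<close>-th factor, and any choice giving
  \<open>\<Prod>\<^sub>j x\<^bsub>d\<^sub>j\<^esub>\<close> has the same index sum, hence picks the least index everywhere.
\<close>

lemma finite_minimal_subset:
  assumes "finite X" "P X"
  shows "\<exists>Y\<subseteq>X. P Y \<and> (\<forall>Z\<subset>Y. \<not> P Z)"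
  using assms
proof (induction X rule: finite_psubset_induct)
  case (psubset X)
  show ?case
  proof (cases "\<exists>Z\<subset>X. P Z")
    case True
    then obtain Z where "Z \<subset> X" "P Z" by blast
    with psubset.IH obtain Y where "Y \<subseteq> Z" "P Y" "\<forall>W\<subset>Y. \<not> P W" by blast
    with \<open>Z \<subset> X\<close> show ?thesis by blast
  next
    case False
    with psubset.prems show ?thesis by blast
  qed
qed

lemma prod_pm1:
  fixes h :: "'b \<Rightarrow> 'k::comm_ring_1"
  assumes "\<And>j. j \<in> S \<Longrightarrow> h j \<in> {1, -1}"
  shows "(\<Prod>j\<in>S. h j) \<in> {1, -1}"
  using assms
proof (induction S rule: infinite_finite_induct)
  case (insert x F)
  then have "h x = 1 \<or> h x = -1" "prod h F = 1 \<or> prod h F = -1" by auto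
  with insert.hyps show ?case by (elim disjE) auto
qed simp_all


section \<open>Monomials as sums of exponent vectors\<close>

lemma lookup_sum_single_one:
  "finite S \<Longrightarrow>
     Poly_Mapping.lookup (\<Sum>j\<in>S. Poly_Mapping.single (f j) (1::nat)) l = card {j\<in>S. f j = l}"
proof (induction S rule: finite_induct)
  case (insert x F)
  have "{j\<in>insert x F. f j = l} = (if f x = l then insert x {j\<in>F. f j = l} else {j\<in>F. f j = l})"
    by auto
  with insert show ?case by (auto simp: lookup_add lookup_single when_def)
qed simp

lemma sum_single_one_const:
  "(\<Sum>j\<in>S. Poly_Mapping.single k (1::nat)) = Poly_Mapping.single k (card S)"
  by (induction S rule: infinite_finite_induct) (simp_all add: single_add[symmetric])

lemma sum_single_one_eq_const_imp:
  assumes "finite S"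
    and "(\<Sum>j\<in>S. Poly_Mapping.single (f j) (1::nat)) = (\<Sum>j\<in>S. Poly_Mapping.single k 1)"
  shows "\<forall>j\<in>S. f j = k"
proof
  fix j assume "j \<in> S"
  then have "card {j'\<in>S. f j' = f j} \<noteq> 0" using \<open>finite S\<close> by auto
  moreover have "card {j'\<in>S. f j' = f j} = card {j'\<in>S. k = f j}"
    using arg_cong[OF assms(2), of "\<lambda>m. Poly_Mapping.lookup m (f j)"]
    by (simp only: lookup_sum_single_one[OF \<open>finite S\<close>])
  ultimately show "f j = k" by (cases "k = f j") auto
qed

lemma sum_single_one_eq_imp_sum_eq:
  fixes f g :: "'b \<Rightarrow> nat"
  assumes "finite S"
    and eq: "(\<Sum>j\<in>S. Poly_Mapping.single (f j) (1::nat)) = (\<Sum>j\<in>S. Poly_Mapping.single (g j) 1)"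
  shows "(\<Sum>j\<in>S. f j) = (\<Sum>j\<in>S. g j)"
proof -
  have count: "card {j\<in>S. f j = l} = card {j\<in>S. g j = l}" for l
    using arg_cong[OF eq, of "\<lambda>m. Poly_Mapping.lookup m l"]
    by (simp only: lookup_sum_single_one[OF \<open>finite S\<close>])
  let ?T = "f ` S \<union> g ` S"
  have "finite ?T" using \<open>finite S\<close> by simp
  have "(\<Sum>j\<in>S. f j) = (\<Sum>l\<in>?T. \<Sum>j\<in>{j\<in>S. f j = l}. f j)"
    by (rule sum.group[symmetric]) (use \<open>finite S\<close> \<open>finite ?T\<close> in auto)
  also have "\<dots> = (\<Sum>l\<in>?T. l * card {j\<in>S. f j = l})" by (simp add: mult.commute)
  also have "\<dots> = (\<Sum>l\<in>?T. l * card {j\<in>S. g j = l})" by (simp add: count)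
  also have "\<dots> = (\<Sum>l\<in>?T. \<Sum>j\<in>{j\<in>S. g j = l}. g j)" by (simp add: mult.commute)
  also have "\<dots> = (\<Sum>j\<in>S. g j)"
    by (rule sum.group) (use \<open>finite S\<close> \<open>finite ?T\<close> in auto)
  finally show ?thesis .
qed

lemma sum_single_one_eq_imp_eq_if_le:
  fixes f t :: "'b \<Rightarrow> nat"
  assumes "finite S" and le: "\<forall>j\<in>S. t j \<le> f j"
    and "(\<Sum>j\<in>S. Poly_Mapping.single (f j) (1::nat)) = (\<Sum>j\<in>S. Poly_Mapping.single (t j) 1)"
  shows "\<forall>j\<in>S. f j = t j"
proof (rule ccontr)
  assume "\<not> (\<forall>j\<in>S. f j = t j)"
  then obtain j where "j \<in> S" "f j \<noteq> t j" by blast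
  then have "t j < f j" using le_neq_implies_less le by auto
  with \<open>j \<in> S\<close> have "(\<Sum>j\<in>S. t j) < (\<Sum>j\<in>S. f j)" using sum_strict_mono_ex1[OF \<open>finite S\<close> le] by blast
  with sum_single_one_eq_imp_sum_eq[OF assms(1,3)] show False by simp
qed

lemma prod_single_single_one:
  fixes g :: "'b \<Rightarrow> 'k::comm_ring_1"
  shows "(\<Prod>j\<in>S. Poly_Mapping.single (Poly_Mapping.single (f j) (1::nat)) (g j))
     = Poly_Mapping.single (\<Sum>j\<in>S. Poly_Mapping.single (f j) 1) (\<Prod>j\<in>S. g j)"
  by (induction S rule: infinite_finite_induct) (simp_all add: mult_single)

lemma lookup_prod_linear_forms_unique_choice:
  fixes c :: "'b \<Rightarrow> nat \<Rightarrow> 'k::comm_ring_1" and t :: "'b \<Rightarrow> nat"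
  assumes S: "finite S" and A: "\<And>j. j \<in> S \<Longrightarrow> finite (A j)" and t: "\<And>j. j \<in> S \<Longrightarrow> t j \<in> A j"
    and unique: "\<And>f. \<forall>j\<in>S. f j \<in> A j \<Longrightarrow>
       (\<Sum>j\<in>S. Poly_Mapping.single (f j) (1::nat)) = (\<Sum>j\<in>S. Poly_Mapping.single (t j) 1) \<Longrightarrow>
       \<forall>j\<in>S. f j = t j"
  shows "Poly_Mapping.lookup
           (\<Prod>j\<in>S. \<Sum>l\<in>A j. Poly_Mapping.single (Poly_Mapping.single l (1::nat)) (c j l))
           (\<Sum>j\<in>S. Poly_Mapping.single (t j) 1)
         = (\<Prod>j\<in>S. c j (t j))"
proof -
  let ?mon = "\<lambda>g. \<Sum>j\<in>S. Poly_Mapping.single (g j) (1::nat)"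
  let ?coeff = "\<lambda>g. (\<Prod>j\<in>S. c j (g j)) when ?mon g = ?mon t"
  have expand: "(\<Prod>j\<in>S. \<Sum>l\<in>A j. Poly_Mapping.single (Poly_Mapping.single l (1::nat)) (c j l))
     = (\<Sum>g\<in>PiE S A. Poly_Mapping.single (?mon g) (\<Prod>j\<in>S. c j (g j)))"
    by (simp only: prod_sum_PiE[OF S A] prod_single_single_one)
  have "restrict t S \<in> PiE S A" using t by simp
  moreover have "?coeff g = 0" if "g \<in> PiE S A - {restrict t S}" for g
  proof -
    have "g \<noteq> restrict t S" "g \<in> extensional S" "\<forall>j\<in>S. g j \<in> A j"
      using that by (simp_all add: PiE_iff)
    then have "\<not> (\<forall>j\<in>S. g j = t j)" by (auto simp: fun_eq_iff extensional_def split: if_split_asm)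
    with unique \<open>\<forall>j\<in>S. g j \<in> A j\<close> have "?mon g \<noteq> ?mon t" by blast
    then show ?thesis by simp
  qed
  then have "(\<Sum>g\<in>PiE S A - {restrict t S}. ?coeff g) = 0" by (rule sum.neutral[OF ballI])
  moreover have "finite (PiE S A)" using S A by (simp add: finite_PiE)
  ultimately have remove: "(\<Sum>g\<in>PiE S A. ?coeff g) = ?coeff (restrict t S)"
    using sum.remove[of "PiE S A" "restrict t S" ?coeff] by simp
  have "Poly_Mapping.lookup (\<Prod>j\<in>S. \<Sum>l\<in>A j. Poly_Mapping.single (Poly_Mapping.single l 1) (c j l))
      (?mon t) = (\<Sum>g\<in>PiE S A. ?coeff g)"
    unfolding expand by (simp add: lookup_sum lookup_single)
  also have "\<dots> = (\<Prod>j\<in>S. c j (t j))" using remove by simp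
  finally show ?thesis .
qed


section \<open>Fundamental circuits and cocircuits under an admissible signing\<close>

lemma admissible_circuit_cocircuit_inter:
  assumes adm: "admissible_fund_signing E ind B (a :: nat \<Rightarrow> nat \<Rightarrow> 'k::field)"
    and "finite E" and C: "circuit E ind C" and D: "cocircuit E ind D" and "e \<in> C" "e \<in> D"
  shows "\<exists>e'\<in>C \<inter> D. e' \<noteq> e"
proof (rule ccontr)
  assume single: "\<not> (\<exists>e'\<in>C \<inter> D. e' \<noteq> e)"
  obtain sC sD :: "nat set \<Rightarrow> nat \<Rightarrow> 'k"
    where sC: "signing (circuit E ind) sC" and sD: "signing (cocircuit E ind) sD"
      and orth: "(\<Sum>x\<in>E. sC C x * sD D x) = 0"
    using adm C D unfolding admissible_fund_signing_def by blast
  have "e \<in> E" using C \<open>e \<in> C\<close> unfolding circuit_def by auto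
  have "sC C x * sD D x = 0" if "x \<in> E - {e}" for x
  proof (cases "x \<in> C")
    case True
    with single that have "x \<notin> D" by auto
    with sD D show ?thesis unfolding signing_def by auto
  next
    case False
    with sC C show ?thesis unfolding signing_def by auto
  qed
  then have "(\<Sum>x\<in>E. sC C x * sD D x) = sC C e * sD D e"
    by (simp add: sum.remove[OF \<open>finite E\<close> \<open>e \<in> E\<close>] sum.neutral)
  moreover have "sC C e \<in> {1, -1}" "sD D e \<in> {1, -1}"
    using sC C sD D \<open>e \<in> C\<close> \<open>e \<in> D\<close> unfolding signing_def by auto
  ultimately show False using orth by auto
qed

lemma matroid_finite: "matroid E ind \<Longrightarrow> finite E"
  unfolding matroid_def by (elim conjE)

lemma matroid_indep_subset_ground:
  assumes "matroid E ind" "ind X"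
  shows "X \<subseteq> E"
proof -
  have "\<forall>X. ind X \<longrightarrow> X \<subseteq> E" using assms(1) unfolding matroid_def by (elim conjE) assumption
  with assms(2) show ?thesis by blast
qed

lemma matroid_indep_subset:
  assumes "matroid E ind" "ind Y" "X \<subseteq> Y"
  shows "ind X"
proof -
  have "\<forall>X Y. ind Y \<and> X \<subseteq> Y \<longrightarrow> ind X" using assms(1) unfolding matroid_def by (elim conjE) assumption
  with assms(2,3) show ?thesis by blast
qed

lemma basis_indep: "basis E ind B \<Longrightarrow> ind B"
  by (simp add: basis_def)

lemma basis_insert_dependent:
  assumes "basis E ind B" "e \<notin> B"
  shows "\<not> ind (insert e B)"
proof
  assume "ind (insert e B)"
  with assms(1) have "insert e B = B" unfolding basis_def by (meson subset_insertI)
  with assms(2) show False by auto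
qed

lemma circuit_mem_if_subset_insert_basis:
  assumes "matroid E ind" "basis E ind B" "circuit E ind C" "C \<subseteq> insert e B"
  shows "e \<in> C"
proof (rule ccontr)
  assume "e \<notin> C"
  with assms(4) have "C \<subseteq> B" by blast
  then have "ind C" using matroid_indep_subset[OF assms(1) basis_indep[OF assms(2)]] by blast
  with assms(3) show False unfolding circuit_def by blast
qed

lemma fundamental_circuit_exists:
  assumes M: "matroid E ind" and bas: "basis E ind B" and "e \<in> E" "e \<notin> B"
  obtains C where "circuit E ind C" "C \<subseteq> insert e B"
proof -
  have "B \<subseteq> E" using matroid_indep_subset_ground[OF M basis_indep[OF bas]] .
  then have "finite (insert e B)" using matroid_finite[OF M] finite_subset by blast
  moreover have "\<not> ind (insert e B)" using basis_insert_dependent[OF bas \<open>e \<notin> B\<close>] .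
  ultimately have "\<exists>C\<subseteq>insert e B. \<not> ind C \<and> (\<forall>Z\<subset>C. \<not> \<not> ind Z)"
    by (rule finite_minimal_subset)
  then obtain C where C: "C \<subseteq> insert e B" "\<not> ind C" "\<forall>Z\<subset>C. ind Z" by auto
  moreover have "C \<subseteq> E" using C(1) \<open>B \<subseteq> E\<close> \<open>e \<in> E\<close> by blast
  ultimately show ?thesis using that unfolding circuit_def by blast
qed

lemma fundamental_cocircuit_exists:
  assumes M: "matroid E ind" and bas: "basis E ind B" and "b \<in> B"
  obtains D where "cocircuit E ind D" "D \<subseteq> insert b (E - B)" "b \<in> D"
proof -
  define transversal where "transversal Y \<longleftrightarrow> (\<forall>B'. basis E ind B' \<longrightarrow> Y \<inter> B' \<noteq> {})" for Y
  have "B \<subseteq> E" using matroid_indep_subset_ground[OF M basis_indep[OF bas]] .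
  have "transversal (insert b (E - B))" unfolding transversal_def
  proof (intro allI impI notI)
    fix B' assume B': "basis E ind B'" and "insert b (E - B) \<inter> B' = {}"
    moreover have "B' \<subseteq> E" using matroid_indep_subset_ground[OF M basis_indep[OF B']] .
    ultimately have "B' \<subseteq> B" "B' \<noteq> B" using \<open>b \<in> B\<close> by blast+
    with B' bas show False unfolding basis_def by blast
  qed
  moreover have "finite (insert b (E - B))" using matroid_finite[OF M] by blast
  ultimately have "\<exists>D\<subseteq>insert b (E - B). transversal D \<and> (\<forall>Z\<subset>D. \<not> transversal Z)"
    by (intro finite_minimal_subset)
  then obtain D where D: "D \<subseteq> insert b (E - B)" "transversal D" "\<forall>Z\<subset>D. \<not> transversal Z"
    by blast
  have "b \<in> D" using D(1,2) bas unfolding transversal_def by blast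
  moreover have "D \<subseteq> E" using D(1) \<open>B \<subseteq> E\<close> \<open>b \<in> B\<close> by blast
  moreover have "\<exists>B'. basis E ind B' \<and> Z \<inter> B' = {}" if "Z \<subset> D" for Z
    using D(3) that unfolding transversal_def by blast
  ultimately have "cocircuit E ind D" using D(2) unfolding cocircuit_def transversal_def by blast
  with D(1) \<open>b \<in> D\<close> show ?thesis using that by blast
qed

text \<open>
  The definitions of \<open>ci\<close> and \<open>coc\<close> use \<open>THE\<close>; uniqueness is derived here from orthogonality
  rather than from the matroid axioms, so admissibility is assumed. For two candidates \<open>C\<^sub>1, C\<^sub>2\<close>
  and \<open>x \<in> C\<^sub>1 \<inter> B\<close>, a fundamental cocircuit of \<open>x\<close> meets \<open>C\<^sub>1\<close> only in \<open>x\<close> and \<open>e\<close>, so it contains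
  \<open>e\<close>; then it meets \<open>C\<^sub>2\<close> in a second element, which can only be \<open>x\<close>. Dually for cocircuits.
\<close>

lemma ci_fundamental:
  assumes M: "matroid E ind" and bas: "basis E ind B" and "e \<in> E" "e \<notin> B"
    and adm: "admissible_fund_signing E ind B a"
  shows "circuit E ind (ci E ind B e)" "ci E ind B e \<subseteq> insert e B"
proof -
  define Q where "Q C \<longleftrightarrow> circuit E ind C \<and> C \<subseteq> insert e B" for C
  have "finite E" using matroid_finite[OF M] .
  have e_in: "e \<in> C" if "Q C" for C
    using circuit_mem_if_subset_insert_basis[OF M bas] that unfolding Q_def by blast
  have "C1 \<subseteq> C2" if 1: "Q C1" and 2: "Q C2" for C1 C2
  proof
    fix x assume "x \<in> C1"
    show "x \<in> C2"
    proof (cases "x = e")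
      case False
      with 1 \<open>x \<in> C1\<close> have "x \<in> B" unfolding Q_def by blast
      then obtain D where D: "cocircuit E ind D" "D \<subseteq> insert x (E - B)" "x \<in> D"
        using fundamental_cocircuit_exists[OF M bas] by blast
      obtain y where "y \<in> C1 \<inter> D" "y \<noteq> x"
        using admissible_circuit_cocircuit_inter[OF adm \<open>finite E\<close> _ D(1) \<open>x \<in> C1\<close> D(3)] 1
        unfolding Q_def by blast
      with 1 D(2) have "e \<in> D" unfolding Q_def by blast
      then obtain z where "z \<in> C2 \<inter> D" "z \<noteq> e"
        using admissible_circuit_cocircuit_inter[OF adm \<open>finite E\<close> _ D(1) e_in[OF 2]] 2
        unfolding Q_def by blast
      with 2 D(2) show ?thesis unfolding Q_def by blast
    qed (use e_in[OF 2] in simp)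
  qed
  moreover obtain C where "Q C"
    using fundamental_circuit_exists[OF M bas assms(3,4)] unfolding Q_def by blast
  ultimately have "\<exists>!C. Q C" by (blast intro: subset_antisym)
  then have "Q (THE C. Q C)" by (rule theI')
  then show "circuit E ind (ci E ind B e)" "ci E ind B e \<subseteq> insert e B"
    unfolding ci_def Q_def by simp_all
qed

lemma coc_fundamental:
  assumes M: "matroid E ind" and bas: "basis E ind B" and "b \<in> B"
    and adm: "admissible_fund_signing E ind B a"
  shows "cocircuit E ind (coc E ind B b)" "coc E ind B b \<subseteq> insert b (E - B)" "b \<in> coc E ind B b"
proof -
  define Q where "Q D \<longleftrightarrow> cocircuit E ind D \<and> D \<subseteq> insert b (E - B) \<and> b \<in> D" for D
  have "finite E" using matroid_finite[OF M] .
  have "D1 \<subseteq> D2" if 1: "Q D1" and 2: "Q D2" for D1 D2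
  proof
    fix x assume "x \<in> D1"
    show "x \<in> D2"
    proof (cases "x = b")
      case False
      with 1 \<open>x \<in> D1\<close> have "x \<in> E" "x \<notin> B" unfolding Q_def by blast+
      then obtain C where C: "circuit E ind C" "C \<subseteq> insert x B"
        using fundamental_circuit_exists[OF M bas] by blast
      have "x \<in> C" using circuit_mem_if_subset_insert_basis[OF M bas C] .
      obtain y where "y \<in> C \<inter> D1" "y \<noteq> x"
        using admissible_circuit_cocircuit_inter[OF adm \<open>finite E\<close> C(1) _ \<open>x \<in> C\<close> \<open>x \<in> D1\<close>] 1
        unfolding Q_def by blast
      with 1 C(2) have "b \<in> C" unfolding Q_def by blast
      then obtain z where "z \<in> C \<inter> D2" "z \<noteq> b"
        using admissible_circuit_cocircuit_inter[OF adm \<open>finite E\<close> C(1), of D2 b] 2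
        unfolding Q_def by blast
      with 2 C(2) show ?thesis unfolding Q_def by blast
    qed (use 2 in \<open>simp add: Q_def\<close>)
  qed
  moreover obtain D where "Q D"
    using fundamental_cocircuit_exists[OF M bas \<open>b \<in> B\<close>] unfolding Q_def by blast
  ultimately have "\<exists>!D. Q D" by (blast intro: subset_antisym)
  then have "Q (THE D. Q D)" by (rule theI')
  then show "cocircuit E ind (coc E ind B b)" "coc E ind B b \<subseteq> insert b (E - B)"
    "b \<in> coc E ind B b" unfolding coc_def Q_def by simp_all
qed


section \<open>The coefficient of \<open>m\<^sub>C\<close> in \<open>p\<^sub>C\<close>\<close>

locale ordered_fundamental_signing =
  fixes n r :: nat and ind :: "nat set \<Rightarrow> bool" and a :: "nat \<Rightarrow> nat \<Rightarrow> 'k::field"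
  assumes matroid: "matroid {1..n} ind"
    and rank_le: "r \<le> n"
    and basis: "basis {1..n} ind {n - r + 1..n}"
    and admissible: "admissible_fund_signing {1..n} ind {n - r + 1..n} a"
begin

abbreviation "E \<equiv> {1..n}"
abbreviation "B \<equiv> {n - r + 1..n}"
abbreviation "K \<equiv> coc E ind B"

definition choices :: "nat \<Rightarrow> nat set" where
  "choices j = (if j \<in> B then K j - {j} else {j})"

definition coefficient :: "nat \<Rightarrow> nat \<Rightarrow> 'k" where
  "coefficient j l = (if j \<in> B then - (inverse (a j j) * a j l) else 1)"

lemma pC_eq_prod_linear_forms:
  "pC n r ind a C = (\<Prod>j\<in>cbar C. \<Sum>l\<in>choices j.
      Poly_Mapping.single (Poly_Mapping.single l (1::nat)) (coefficient j l))"
  unfolding pC_def Let_def choices_def coefficient_def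
  by (intro prod.cong) (simp_all add: Var_def single_uminus sum_negf)

lemma coc_subset_ground: "j \<in> B \<Longrightarrow> K j \<subseteq> E"
  using coc_fundamental(1)[OF matroid basis _ admissible] unfolding cocircuit_def by blast

lemma finite_choices: "finite (choices j)"
proof (cases "j \<in> B")
  case True
  then show ?thesis using finite_subset[OF coc_subset_ground[OF True]] unfolding choices_def by simp
qed (auto simp: choices_def)

lemma finite_circuit: "circuit E ind C \<Longrightarrow> finite C"
  unfolding circuit_def using finite_subset by blast

lemma coefficient_pm1:
  assumes "l \<in> choices j"
  shows "coefficient j l \<in> {1, -1}"
proof (cases "j \<in> B")
  case True
  obtain sC sD :: "nat set \<Rightarrow> nat \<Rightarrow> 'k" where sD: "signing (cocircuit E ind) sD"
    and a: "\<forall>j\<in>B. \<forall>i\<in>E. a j i = sD (K j) i"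
    using admissible unfolding admissible_fund_signing_def by blast
  note K = coc_fundamental[OF matroid basis True admissible]
  have entry_pm1: "a j i \<in> {1, -1}" if "i \<in> K j" for i
  proof -
    have "a j i = sD (K j) i" using a True coc_subset_ground[OF True] that by blast
    with sD K(1) that show ?thesis unfolding signing_def by auto
  qed
  have "l \<in> K j" using assms True unfolding choices_def by simp
  with entry_pm1 K(3) have "a j j = 1 \<or> a j j = -1" "a j l = 1 \<or> a j l = -1" by auto
  then show ?thesis unfolding coefficient_def using True by (elim disjE) simp_all
qed (auto simp: coefficient_def)

lemma lookup_pC_unique_choice:
  assumes C: "circuit E ind C" and t: "\<And>j. j \<in> cbar C \<Longrightarrow> t j \<in> choices j"
    and unique: "\<And>f. \<forall>j\<in>cbar C. f j \<in> choices j \<Longrightarrow>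
       (\<Sum>j\<in>cbar C. Poly_Mapping.single (f j) (1::nat)) = (\<Sum>j\<in>cbar C. Poly_Mapping.single (t j) 1) \<Longrightarrow>
       \<forall>j\<in>cbar C. f j = t j"
  shows "Poly_Mapping.lookup (pC n r ind a C) (\<Sum>j\<in>cbar C. Poly_Mapping.single (t j) 1) \<in> {1, -1}"
proof -
  have "finite (cbar C)" using finite_circuit[OF C] unfolding cbar_def by blast
  then have "Poly_Mapping.lookup (pC n r ind a C) (\<Sum>j\<in>cbar C. Poly_Mapping.single (t j) 1)
      = (\<Prod>j\<in>cbar C. coefficient j (t j))"
    unfolding pC_eq_prod_linear_forms
    by (rule lookup_prod_linear_forms_unique_choice[OF _ finite_choices t unique])
  also have "\<dots> \<in> {1, -1}" by (rule prod_pm1) (rule coefficient_pm1[OF t])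
  finally show ?thesis .
qed

lemma circuit_meets_coc_below:
  assumes "circuit E ind C" "j \<in> C" "j \<in> B"
  obtains i where "i \<in> C" "i \<in> choices j" "i < j" "i \<notin> B"
proof -
  note K = coc_fundamental[OF matroid basis \<open>j \<in> B\<close> admissible]
  obtain i where "i \<in> C \<inter> K j" "i \<noteq> j"
    using admissible_circuit_cocircuit_inter[OF admissible _ assms(1) K(1) assms(2) K(3)] by auto
  moreover from this have "i \<in> E - B" using K(2) by blast
  ultimately show ?thesis using that \<open>j \<in> B\<close> unfolding choices_def by auto
qed

lemma lookup_pC_fundamental_circuit:
  assumes i: "i \<in> {1..n - r}" and C: "C = ci E ind B i"
  shows "Poly_Mapping.lookup (pC n r ind a C) (mC n r ind C) \<in> {1, -1}"
proof -
  have ci_props: "circuit E ind (ci E ind B i') \<and> ci E ind B i' \<subseteq> insert i' B"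
    if "i' \<in> {1..n - r}" for i'
  proof -
    have "i' \<in> E" "i' \<notin> B" using that rank_le by auto
    then show ?thesis using ci_fundamental[OF matroid basis _ _ admissible] by blast
  qed
  have circ: "circuit E ind C" and CiB: "C \<subseteq> insert i B" unfolding C using ci_props[OF i] by blast+
  have "i \<in> C" using circuit_mem_if_subset_insert_basis[OF matroid basis circ CiB] .
  have the_index: "(THE i'. i' \<in> {1..n - r} \<and> C = ci E ind B i') = i"
  proof (rule the_equality)
    fix i' assume "i' \<in> {1..n - r} \<and> C = ci E ind B i'"
    with ci_props[of i'] \<open>i \<in> C\<close> have "i \<in> insert i' B" by blast
    with i show "i' = i" by auto
  qed (use i C in blast)
  have "mC n r ind C = Poly_Mapping.single (THE i'. i' \<in> {1..n - r} \<and> C = ci E ind B i') (card (cbar C))"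
    unfolding mC_def Let_def by (rule if_P) (use i C in blast)
  also have "\<dots> = (\<Sum>j\<in>cbar C. Poly_Mapping.single i 1)"
    by (simp only: the_index sum_single_one_const)
  finally have mC: "mC n r ind C = (\<Sum>j\<in>cbar C. Poly_Mapping.single i 1)" .
  have lower: "i \<le> y" if "y \<in> C" for y using CiB that i by auto
  have "Min C = i" using Min_eqI[OF finite_circuit[OF circ] lower \<open>i \<in> C\<close>] .
  then have cbar: "cbar C \<subseteq> C \<inter> B" using CiB unfolding cbar_def by blast
  have "finite (cbar C)" using finite_circuit[OF circ] unfolding cbar_def by blast
  show ?thesis unfolding mC
  proof (rule lookup_pC_unique_choice[OF circ])
    fix j assume "j \<in> cbar C"
    then have "j \<in> C" "j \<in> B" using cbar by blast+
    then obtain i' where "i' \<in> C" "i' \<in> choices j" "i' \<notin> B"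
      by (rule circuit_meets_coc_below[OF circ])
    with CiB show "i \<in> choices j" by blast
  next
    fix f assume "\<forall>j\<in>cbar C. f j \<in> choices j"
      and eq: "(\<Sum>j\<in>cbar C. Poly_Mapping.single (f j) (1::nat)) = (\<Sum>j\<in>cbar C. Poly_Mapping.single i 1)"
    from sum_single_one_eq_const_imp[OF \<open>finite (cbar C)\<close> eq] show "\<forall>j\<in>cbar C. f j = i" .
  qed
qed

lemma dd_least_choice:
  assumes "circuit E ind C" "j \<in> C"
  shows "dd E ind B j \<in> choices j \<and> (\<forall>l\<in>choices j. dd E ind B j \<le> l)"
proof (cases "j \<in> B")
  case True
  obtain i where "i \<in> choices j" "i < j" using circuit_meets_coc_below[OF assms True] by blast
  have "finite (K j)" using finite_subset[OF coc_subset_ground[OF True]] by blast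
  have choices: "choices j = K j - {j}" and dd: "dd E ind B j = Min (K j)"
    using True unfolding choices_def dd_def by simp_all
  have "Min (K j) \<le> i" using Min_le[OF \<open>finite (K j)\<close>] \<open>i \<in> choices j\<close> choices by blast
  moreover have "Min (K j) \<in> K j" using Min_in[OF \<open>finite (K j)\<close>] \<open>i \<in> choices j\<close> choices by blast
  moreover have "Min (K j) \<le> l" if "l \<in> choices j" for l
    using Min_le[OF \<open>finite (K j)\<close>] that choices by blast
  ultimately show ?thesis using \<open>i < j\<close> unfolding choices dd by auto
qed (auto simp: dd_def choices_def)

lemma lookup_pC_other_circuit:
  assumes C: "circuit E ind C" and not_fundamental: "\<not> (\<exists>i\<in>{1..n - r}. C = ci E ind B i)"
  shows "Poly_Mapping.lookup (pC n r ind a C) (mC n r ind C) \<in> {1, -1}"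
proof -
  have mC: "mC n r ind C = (\<Sum>j\<in>cbar C. Poly_Mapping.single (dd E ind B j) 1)"
    unfolding mC_def Let_def by (simp only: if_not_P[OF not_fundamental])
  have least: "dd E ind B j \<in> choices j \<and> (\<forall>l\<in>choices j. dd E ind B j \<le> l)" if "j \<in> cbar C" for j
    using dd_least_choice[OF C] that unfolding cbar_def by blast
  have "finite (cbar C)" using finite_circuit[OF C] unfolding cbar_def by blast
  show ?thesis unfolding mC
  proof (rule lookup_pC_unique_choice[OF C])
    fix j assume "j \<in> cbar C"
    with least show "dd E ind B j \<in> choices j" by blast
  next
    fix f assume f: "\<forall>j\<in>cbar C. f j \<in> choices j"
      and eq: "(\<Sum>j\<in>cbar C. Poly_Mapping.single (f j) (1::nat))
        = (\<Sum>j\<in>cbar C. Poly_Mapping.single (dd E ind B j) 1)"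
    have "\<forall>j\<in>cbar C. dd E ind B j \<le> f j" using f least by blast
    from sum_single_one_eq_imp_eq_if_le[OF \<open>finite (cbar C)\<close> this eq]
    show "\<forall>j\<in>cbar C. f j = dd E ind B j" .
  qed
qed

end

theorem lemma4p2:
  fixes n r :: nat and ind :: "nat set \<Rightarrow> bool"
    and a :: "nat \<Rightarrow> nat \<Rightarrow> 'k::field" and C :: "nat set"
  assumes "matroid {1..n} ind"
    and "regular {1..n} ind"
    and "r \<le> n"
    and "basis {1..n} ind {n - r + 1..n}"
    and "admissible_fund_signing {1..n} ind {n - r + 1..n} a"
    and "circuit {1..n} ind C"
  shows "Poly_Mapping.lookup (pC n r ind a C) (mC n r ind C) \<in> {1, -1}"
proof -
  interpret ordered_fundamental_signing n r ind a
    using assms(1,3,4,5) by unfold_locales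
  show ?thesis
    using lookup_pC_fundamental_circuit lookup_pC_other_circuit assms(6) by blast
qed

end
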